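(* In the Core Tuplix Calculus $\mathbf{CTC}$ over a nonempty attribute set $A$ and a non-trivial cancellation meadow $\mathcal{D}$ (defined in the context), for all data terms $p$ and $q$: if $\mathcal{D}\models (1-p/p)\cdot q=0$, then $\mathbf{CTC}\vdash \gamma(p)=\gamma(p)\oplus\gamma(q)$.
   Context: Data: a meadow is a commutative ring with unit with a total unary operation $(\cdot)^{-1}$ satisfying $(u^{-1})^{-1}=u$ and $u\cdot(u\cdot u^{-1})=u$; a non-trivial cancellation meadow additionally satisfies $0\neq 1$ and the cancellation law ($u\neq 0$ and $uv=uw$ imply $v=w$). Fix such a structure $\mathcal{D}$. Data terms are built from data variables ($u,v,w,\dots$), constants $0,1$, binary $+,\cdot$ and unary $-$, $(\cdot)^{-1}$; write $p/q$ for $p\cdot q^{-1}$ and $p-q$ for $p+(-q)$; $\mathcal{D}\models p=q$ means the identity holds for all valuations of the data variables in $\mathcal{D}$. Fix a nonempty set $A$ of attributes. Tuplix terms are built from tuplix variables, constants $\epsilon$ and $\delta$, entries $a(p)$ ($a\in A$, $p$ a data term), zero tests $\gamma(p)$, and the binary operator $\oplus$. $\mathbf{CTC}$ is the two-sorted equational proof system with axioms (T1) $x\oplus y=y\oplus x$; (T2) $(x\oplus y)\oplus z=x\oplus(y\oplus z)$; (T3) $x\oplus\epsilon=x$; (T4) $x\oplus\delta=\delta$; (T5) $a(u)\oplus a(v)=a(u+v)$; (T6) $\gamma(u)=\gamma(u/u)$; (T7) $\gamma(0)=\epsilon$; (T8) $\gamma(1)=\delta$; (T9) $\gamma(u)\oplus\gamma(v)=\gamma(u/u+v/v)$;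 (T10) $\gamma(u-v)\oplus a(u)=\gamma(u-v)\oplus a(v)$ (for all $a\in A$), together with the rule (DE): for all data terms $p,q$, if $\mathcal{D}\models p=q$ then $\gamma(p)=\gamma(q)$ is derivable. *)

theory Defs
  imports Main
begin

class cmeadow = comm_ring_1 + inverse +
  assumes meadow_inv_inv: "inverse (inverse u) = u"
    and meadow_ril: "u * (u * inverse u) = u"
    and meadow_nontrivial: "(0::'a) \<noteq> 1"
    and meadow_cancel: "u \<noteq> 0 \<Longrightarrow> u * v = u * w \<Longrightarrow> v = w"

datatype dterm =
    DVar nat
  | DZero
  | DOne
  | DPlus dterm dterm
  | DTimes dterm dterm
  | DNeg dterm
  | DInv dterm

definition DDiv :: "dterm \<Rightarrow> dterm \<Rightarrow> dterm" where
  "DDiv p q = DTimes p (DInv q)"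

definition DMinus :: "dterm \<Rightarrow> dterm \<Rightarrow> dterm" where
  "DMinus p q = DPlus p (DNeg q)"

primrec deval :: "(nat \<Rightarrow> 'd::cmeadow) \<Rightarrow> dterm \<Rightarrow> 'd" where
  "deval \<rho> (DVar n) = \<rho> n"
| "deval \<rho> DZero = 0"
| "deval \<rho> DOne = 1"
| "deval \<rho> (DPlus p q) = deval \<rho> p + deval \<rho> q"
| "deval \<rho> (DTimes p q) = deval \<rho> p * deval \<rho> q"
| "deval \<rho> (DNeg p) = - deval \<rho> p"
| "deval \<rho> (DInv p) = inverse (deval \<rho> p)"

text \<open>D |= p = q: the identity holds under all valuations in D (the type 'd).\<close>
definition dmodels :: "'d::cmeadow itself \<Rightarrow> dterm \<Rightarrow> dterm \<Rightarrow> bool" where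
  "dmodels D p q \<longleftrightarrow> (\<forall>\<rho> :: nat \<Rightarrow> 'd. deval \<rho> p = deval \<rho> q)"

datatype 'a tterm =
    TVar nat
  | Eps
  | Delta
  | Entry 'a dterm
  | Gamma dterm
  | Oplus "'a tterm" "'a tterm"

text \<open>Equational logic: reflexivity, symmetry, transitivity, congruence for the
  only tuplix-argument operator (oplus), all substitution instances of T1--T10
  (axioms are stated as schemas over arbitrary terms), and the rule DE.\<close>

inductive CTC :: "'d::cmeadow itself \<Rightarrow> 'a tterm \<Rightarrow> 'a tterm \<Rightarrow> bool" for D where
  refl: "CTC D x x"
| sym: "CTC D x y \<Longrightarrow> CTC D y x"
| trans: "CTC D x y \<Longrightarrow> CTC D y z \<Longrightarrow> CTC D x z"
| cong: "CTC D x x' \<Longrightarrow> CTC D y y' \<Longrightarrow> CTC D (Oplus x y) (Oplus x' y')"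
| T1: "CTC D (Oplus x y) (Oplus y x)"
| T2: "CTC D (Oplus (Oplus x y) z) (Oplus x (Oplus y z))"
| T3: "CTC D (Oplus x Eps) x"
| T4: "CTC D (Oplus x Delta) Delta"
| T5: "CTC D (Oplus (Entry a u) (Entry a v)) (Entry a (DPlus u v))"
| T6: "CTC D (Gamma u) (Gamma (DDiv u u))"
| T7: "CTC D (Gamma DZero) Eps"
| T8: "CTC D (Gamma DOne) Delta"
| T9: "CTC D (Oplus (Gamma u) (Gamma v)) (Gamma (DPlus (DDiv u u) (DDiv v v)))"
| T10: "CTC D (Oplus (Gamma (DMinus u v)) (Entry a u)) (Oplus (Gamma (DMinus u v)) (Entry a v))"
| DE: "dmodels D p q \<Longrightarrow> CTC D (Gamma p) (Gamma q)"

end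

theory Submission
  imports Defs
begin

text \<open>By T6, \<open>\<gamma>(p)\<close> depends only on the sign \<open>p/p\<close>, and by T9 the right-hand side is
  \<open>\<gamma>(s)\<close> with \<open>s = p/p + q/q\<close>. The hypothesis says \<open>q = 0\<close> wherever \<open>p = 0\<close>, so \<open>s/s = p/p\<close>
  holds in the meadow unless \<open>1 + 1 = 0\<close> (then \<open>p/p = q/q = 1\<close> gives \<open>s = 0\<close>). In that
  characteristic-2 case, however, \<open>\<epsilon> = \<gamma>(1/1 + 1/1) = \<gamma>(1) \<oplus> \<gamma>(1) = \<delta>\<close>, and CTC proves every
  equation.\<close>

lemma cmeadow_inverse_zero [simp]: "inverse (0::'d::cmeadow) = 0"
  using meadow_ril[of "inverse (0::'d)"] by (simp add: meadow_inv_inv)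

lemma cmeadow_mult_inverse: "(x::'d::cmeadow) * inverse x = (if x = 0 then 0 else 1)"
  by (auto intro: meadow_cancel[of x] simp: meadow_ril)

lemma cmeadow_inverse_one [simp]: "inverse (1::'d::cmeadow) = 1"
  using cmeadow_mult_inverse[of "1::'d"] meadow_nontrivial by simp

lemma cmeadow_sign_of_sign_sum:
  fixes a b :: "'d::cmeadow"
  assumes "1 + 1 \<noteq> (0::'d)" and "(1 - a * inverse a) * b = 0"
  defines "s \<equiv> a * inverse a + b * inverse b"
  shows "s * inverse s = a * inverse a"
proof (cases "a = 0")
  case True
  with assms(2) have "b = 0" by (simp add: cmeadow_mult_inverse)
  with True show ?thesis by (simp add: s_def)
next
  case False
  then have "s = 1 + b * inverse b" by (simp add: s_def cmeadow_mult_inverse)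
  then have "s \<noteq> 0" using assms(1) meadow_nontrivial by (simp add: cmeadow_mult_inverse)
  with False show ?thesis by (simp add: cmeadow_mult_inverse)
qed

declare CTC.trans [trans]

lemma CTC_Gamma_eq_if_sign_eq:
  assumes "dmodels D (DDiv p p) (DDiv q q)"
  shows "CTC D (Gamma p) (Gamma q)"
  by (meson CTC.T6 CTC.DE[OF assms] CTC.sym CTC.trans)

lemma CTC_Eps_Delta_if_char_two:
  assumes "(1::'d::cmeadow) + 1 = 0"
  shows "CTC TYPE('d) Eps Delta"
proof -
  have "CTC TYPE('d) Eps (Gamma DZero)"
    by (rule CTC.sym, rule CTC.T7)
  also have "CTC TYPE('d) \<dots> (Gamma (DPlus (DDiv DOne DOne) (DDiv DOne DOne)))"
    by (rule CTC.DE) (simp add: dmodels_def DDiv_def assms[symmetric])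
  also have "CTC TYPE('d) \<dots> (Oplus (Gamma DOne) (Gamma DOne))"
    by (rule CTC.sym, rule CTC.T9)
  also have "CTC TYPE('d) \<dots> (Oplus (Gamma DOne) Delta)"
    by (rule CTC.cong[OF CTC.refl CTC.T8])
  also have "CTC TYPE('d) \<dots> Delta"
    by (rule CTC.T4)
  finally show ?thesis .
qed

lemma CTC_trivial_if_char_two:
  assumes "(1::'d::cmeadow) + 1 = 0"
  shows "CTC TYPE('d) x y"
proof -
  have collapse: "CTC TYPE('d) z Delta" for z
    by (meson CTC.T3 CTC.T4 CTC.cong[OF CTC.refl CTC_Eps_Delta_if_char_two[OF assms]]
        CTC.sym CTC.trans)
  show ?thesis by (meson collapse CTC.sym CTC.trans)
qed

theorem lemma2:
  fixes p q :: dterm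
  assumes "dmodels TYPE('d::cmeadow) (DTimes (DMinus DOne (DDiv p p)) q) DZero"
  shows "CTC TYPE('d) (Gamma p :: 'a tterm) (Oplus (Gamma p) (Gamma q))"
proof (cases "(1::'d) + 1 = 0")
  case True
  then show ?thesis by (rule CTC_trivial_if_char_two)
next
  case False
  define s where "s = DPlus (DDiv p p) (DDiv q q)"
  have "dmodels TYPE('d) (DDiv p p) (DDiv s s)"
    using assms cmeadow_sign_of_sign_sum[OF False]
    by (simp add: dmodels_def s_def DDiv_def DMinus_def)
  then have "CTC TYPE('d) (Gamma p :: 'a tterm) (Gamma s)"
    by (rule CTC_Gamma_eq_if_sign_eq)
  moreover have "CTC TYPE('d) (Gamma s :: 'a tterm) (Oplus (Gamma p) (Gamma q))"
    unfolding s_def by (rule CTC.sym, rule CTC.T9)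
  ultimately show ?thesis by (rule CTC.trans)
qed

end
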